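(* Let $\alpha>-1$, $0\le\gamma<2+\alpha$ and $1<p\le q<\infty$. Let $\omega$ be a weight and $\mu$ a positive Borel measure on $\mathcal H$ such that for some $r>1$ and some $C>0$, for every interval $I\subset\mathbb R$, $$|Q_I|_\alpha^{q(\frac{\gamma}{2+\alpha}-\frac1p)}\left(\frac1{|Q_I|_\alpha}\int_{Q_I}\omega^{-p'r}dV_\alpha\right)^{\frac{q}{p'r}}\mu(Q_I)\le C.$$ Then there is $K>0$ such that for every $f\in L^p(\mathcal H,\omega dV_\alpha)$, $$\left(\int_{\mathcal H}(\mathcal M_{\alpha,\gamma}f)^qd\mu\right)^{1/q}\le K\|f\omega\|_{p,\alpha}.$$
   Context: $\mathcal H=\{x+iy:x\in\mathbb R,\ y>0\}$; for $\alpha>-1$, $dV_\alpha(x+iy)=y^\alpha dx\,dy$; $\|g\|_{p,\alpha}=(\int_{\mathcal H}|g|^pdV_\alpha)^{1/p}$; $p'$ is the conjugate exponent. A weight is a nonnegative locally integrable function. For an interval $I$, $Q_I=\{x+iy:x\in I,0<y<|I|\}$, $|Q_I|_\alpha=\int_{Q_I}dV_\alpha$. $\mathcal M_{\alpha,\gamma}f(z)=\sup\{|I|^{-(2+\alpha-\gamma)}\int_{Q_I}|f|dV_\alpha: I\subset\mathbb R\text{ interval}, z\in Q_I\}$. *)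

theory Defs
  imports "HOL-Analysis.Analysis"
begin

definition H :: "complex set" where
  "H = {z. Im z > 0}"

definition dV :: "real \<Rightarrow> complex measure" where
  "dV \<alpha> = density lborel (\<lambda>z. indicator H z * ennreal (Im z powr \<alpha>))"

definition real_interval :: "real set \<Rightarrow> bool" where
  "real_interval I \<longleftrightarrow> is_interval I \<and> bounded I \<and> I \<noteq> {} \<and> Inf I < Sup I"

definition ilen :: "real set \<Rightarrow> real" where
  "ilen I = Sup I - Inf I"

definition Qbox :: "real set \<Rightarrow> complex set" where
  "Qbox I = {z. Re z \<in> I \<and> 0 < Im z \<and> Im z < ilen I}"

text \<open>Real powers of extended nonnegative reals (for positive exponents):
  infinity stays infinity.\<close>
definition epowr :: "ennreal \<Rightarrow> real \<Rightarrow> ennreal" where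
  "epowr x a = (if x = \<infinity> then \<infinity> else ennreal (enn2real x powr a))"

definition Mag :: "real \<Rightarrow> real \<Rightarrow> (complex \<Rightarrow> complex) \<Rightarrow> complex \<Rightarrow> ennreal" where
  "Mag \<alpha> \<gamma> f z = (SUP I\<in>{I. real_interval I \<and> z \<in> Qbox I}.
      ennreal (ilen I powr (-(2 + \<alpha> - \<gamma>))) *
      (\<integral>\<^sup>+ w. indicator (Qbox I) w * ennreal (norm (f w)) \<partial>dV \<alpha>))"

definition negpow :: "real \<Rightarrow> real \<Rightarrow> ennreal" where
  "negpow s x = (if x = 0 then \<infinity> else ennreal (x powr (-s)))"

end

theory Submission
  imports Defs
begin

text \<open>
  Every Carleson box Q_I lies in a box Q_j of a fixed countable family of dyadic boxes of
  comparable side, so (M_{\<alpha>,\<gamma>} f)^q is dominated pointwise by \<Sum>_j B_j^q 1_{Q_j}, where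
  B_j = side(Q_j)^{-\<kappa>} \<integral>_{Q_j} |f| dV_\<alpha> and \<kappa> = 2 + \<alpha> - \<gamma>; integrating against \<mu> leaves
  \<Sum>_j B_j^q \<mu>(Q_j). On each box write |f| = (|f| \<omega> y^\<delta>) \<omega>^{-1} y^{-\<delta>} and apply Hoelder with
  exponents p, s = p'r and the remaining u: the testing condition absorbs the factor \<omega>^{-1}
  together with \<mu>(Q_j), the factor y^{-\<delta>} is integrable for small \<delta> > 0, and all powers of the
  side cancel. What remains is \<Sum>_j X_j^{q/p} with X_j = side(Q_j)^{-\<delta>p} \<integral>_{Q_j} |f\<omega>|^p y^{\<delta>p} dV_\<alpha>.
  As q/p \<ge> 1 this is at most (\<Sum>_j X_j)^{q/p}, and a point z lies in at most three boxes per scale,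
  all of side > Im z, so the weights (Im z / side)^{\<delta>p} sum to a geometric series and
  \<Sum>_j X_j is bounded by a multiple of \<integral> |f\<omega>|^p dV_\<alpha>.
\<close>

lemma epowr_top[simp]: "epowr top a = top"
  by (simp add: epowr_def)

lemma epowr_0[simp]: "epowr 0 a = 0"
  by (simp add: epowr_def)

lemma epowr_1[simp]: "epowr x 1 = x"
  by (cases x) (auto simp: epowr_def)

lemma epowr_ennreal: "c \<ge> 0 \<Longrightarrow> epowr (ennreal c) a = ennreal (c powr a)"
  by (simp add: epowr_def)

lemma epowr_mono: assumes "a > 0" "x \<le> y" shows "epowr x a \<le> epowr y a"
proof (cases "y = \<infinity>")
  case False
  then have "x \<noteq> \<infinity>" using assms(2) by (auto simp: top_unique)
  then show ?thesis using False assms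
    by (auto simp: epowr_def top.not_eq_extremum intro!: ennreal_leI powr_mono2 enn2real_mono)
qed (simp add: epowr_def)

lemma epowr_epowr: assumes "a > 0" "b > 0" shows "epowr (epowr x a) b = epowr x (a * b)"
  using assms by (cases x) (auto simp: epowr_def powr_powr)

lemma epowr_pos: assumes "x > 0" shows "epowr x a > 0"
  using assms by (cases x) (auto simp: epowr_def)

lemma epowr_mult: assumes "a > 0" shows "epowr (x * y) a = epowr x a * epowr y a"
proof (cases "x = \<infinity> \<or> y = \<infinity>")
  case top: True
  have nz: "epowr v a \<noteq> 0" if "v \<noteq> 0" for v
    using epowr_pos[of v a] that by (simp add: zero_less_iff_neq_zero)
  show ?thesis
  proof (cases "x = 0 \<or> y = 0")
    case False
    with top nz[of x] nz[of y] show ?thesis by (auto simp: ennreal_mult_eq_top_iff)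
  qed auto
next
  case False
  then obtain u v where "x = ennreal u" "y = ennreal v" "u \<ge> 0" "v \<ge> 0"
    by (cases x; cases y) auto
  then show ?thesis using assms
    by (simp add: epowr_def ennreal_mult[symmetric] powr_mult)
qed

lemma epowr_cmult: assumes "a > 0" "c \<ge> 0" shows "epowr (ennreal c * y) a = ennreal (c powr a) * epowr y a"
  using epowr_mult[OF assms(1)] epowr_ennreal[OF assms(2)] by simp

lemma epowr_le_imp_le_epowr_inverse: assumes "q > 0" "epowr x q \<le> T" shows "x \<le> epowr T (1/q)"
proof -
  have "x = epowr (epowr x q) (1/q)" using assms by (simp add: epowr_epowr)
  also have "\<dots> \<le> epowr T (1/q)" using assms by (intro epowr_mono) auto
  finally show ?thesis .
qed

subsection \<open>Hoelder's inequality for nonnegative integrals\<close>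

lemma Youngs_inequality_scaled:
  fixes a b x y p q :: real
  assumes p: "p > 1" and q: "q > 1" and pq: "1/p + 1/q = 1"
    and a: "a > 0" and b: "b > 0" and x: "x \<ge> 0" and y: "y \<ge> 0"
  shows "x * y \<le> a powr (1/p) * b powr (1/q) * (x powr p / (p*a) + y powr q / (q*b))"
proof -
  define X where "X = x / a powr (1/p)"
  define Y where "Y = y / b powr (1/q)"
  have ka: "a powr (1/p) > 0" and kb: "b powr (1/q) > 0" using a b by auto
  have "X \<ge> 0" "Y \<ge> 0" using x y ka kb by (auto simp: X_def Y_def)
  then have "X * Y \<le> X powr p / p + Y powr q / q"
    using Youngs_inequality[OF p q pq] by blast
  moreover have "X powr p = x powr p / a"
    using x a p by (simp add: X_def powr_divide powr_powr)
  moreover have "Y powr q = y powr q / b"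
    using y b q by (simp add: Y_def powr_divide powr_powr)
  ultimately have "X * Y \<le> x powr p / (p*a) + y powr q / (q*b)" by (simp add: field_simps)
  moreover have "a powr (1/p) * b powr (1/q) * (X * Y) = x * y"
    using ka kb by (simp add: X_def Y_def field_simps)
  ultimately show ?thesis using ka kb
    by (metis mult_left_mono mult_pos_pos order.strict_implies_order)
qed

lemma nn_integral_Holder:
  fixes F G :: "'a \<Rightarrow> real"
  assumes p: "p > 1" and q: "q > 1" and pq: "1/p + 1/q = 1"
    and [measurable]: "F \<in> borel_measurable M" "G \<in> borel_measurable M"
    and nnF: "\<And>x. F x \<ge> 0" and nnG: "\<And>x. G x \<ge> 0"
  shows "(\<integral>\<^sup>+x. ennreal (F x * G x) \<partial>M) \<le>
     epowr (\<integral>\<^sup>+x. ennreal (F x powr p) \<partial>M) (1/p) * epowr (\<integral>\<^sup>+x. ennreal (G x powr q) \<partial>M) (1/q)"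
proof -
  define A where "A = (\<integral>\<^sup>+x. ennreal (F x powr p) \<partial>M)"
  define B where "B = (\<integral>\<^sup>+x. ennreal (G x powr q) \<partial>M)"
  consider "A = 0 \<or> B = 0" | "A \<noteq> 0" "B \<noteq> 0" "A = \<infinity> \<or> B = \<infinity>" | "A \<noteq> 0" "B \<noteq> 0" "A \<noteq> \<infinity>" "B \<noteq> \<infinity>"
    by blast
  then show ?thesis
  proof cases
    case 1
    then have "AE x in M. F x powr p = 0 \<or> G x powr q = 0"
      unfolding A_def B_def by (subst (asm) (1 2) nn_integral_0_iff_AE) auto
    then have "AE x in M. ennreal (F x * G x) = 0"
      by eventually_elim (use nnF nnG in auto)
    then have "(\<integral>\<^sup>+x. ennreal (F x * G x) \<partial>M) = 0"
      by (simp add: nn_integral_0_iff_AE)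
    then show ?thesis by simp
  next
    case 2
    then have "epowr A (1/p) * epowr B (1/q) = \<infinity>"
      using epowr_pos[of A "1/p"] epowr_pos[of B "1/q"]
      by (auto simp: zero_less_iff_neq_zero ennreal_mult_eq_top_iff)
    then show ?thesis unfolding A_def B_def by simp
  next
    case 3
    then obtain a b where Aa: "A = ennreal a" and Bb: "B = ennreal b" and a: "a > 0" and b: "b > 0"
      by (cases A; cases B) auto
    define k where "k = a powr (1/p) * b powr (1/q)"
    have "(\<integral>\<^sup>+x. ennreal (F x * G x) \<partial>M) \<le>
          (\<integral>\<^sup>+x. ennreal k * (ennreal (1/(p*a)) * ennreal (F x powr p) + ennreal (1/(q*b)) * ennreal (G x powr q)) \<partial>M)"
    proof (intro nn_integral_mono)
      fix x
      have "F x * G x \<le> k * (1/(p*a) * F x powr p + 1/(q*b) * G x powr q)"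
        using Youngs_inequality_scaled[OF p q pq a b nnF[of x] nnG[of x]] by (simp add: k_def)
      then show "ennreal (F x * G x) \<le> ennreal k * (ennreal (1/(p*a)) * ennreal (F x powr p) + ennreal (1/(q*b)) * ennreal (G x powr q))"
        using p q a b by (simp add: k_def ennreal_mult[symmetric] ennreal_plus[symmetric] del: ennreal_plus)
    qed
    also have "\<dots> = ennreal k * (ennreal (1/(p*a)) * A + ennreal (1/(q*b)) * B)"
      unfolding A_def B_def by (simp add: nn_integral_cmult nn_integral_add)
    also have "\<dots> = ennreal k * ennreal (1/(p*a) * a + 1/(q*b) * b)"
      using a b p q by (simp add: Aa Bb ennreal_mult[symmetric] ennreal_plus[symmetric] del: ennreal_plus)
    also have "1/(p*a) * a + 1/(q*b) * b = 1" using a b pq by simp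
    also have "ennreal k * ennreal 1 = epowr A (1/p) * epowr B (1/q)"
      using a b by (simp add: Aa Bb epowr_ennreal k_def ennreal_mult[symmetric])
    finally show ?thesis unfolding A_def B_def .
  qed
qed

lemma nn_integral_Holder3:
  fixes F G H :: "'a \<Rightarrow> real"
  assumes p: "p > 1" and s: "s > 1" and u: "u > 1" and psu: "1/p + 1/s + 1/u = 1"
    and [measurable]: "F \<in> borel_measurable M" "G \<in> borel_measurable M" "H \<in> borel_measurable M"
    and nnF: "\<And>x. F x \<ge> 0" and nnG: "\<And>x. G x \<ge> 0" and nnH: "\<And>x. H x \<ge> 0"
  shows "(\<integral>\<^sup>+x. ennreal (F x * G x * H x) \<partial>M) \<le>
     epowr (\<integral>\<^sup>+x. ennreal (F x powr p) \<partial>M) (1/p) * epowr (\<integral>\<^sup>+x. ennreal (G x powr s) \<partial>M) (1/s)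
     * epowr (\<integral>\<^sup>+x. ennreal (H x powr u) \<partial>M) (1/u)"
proof -
  define p' where "p' = p / (p - 1)"
  have ip': "1/p' = 1/s + 1/u" using p psu by (simp add: p'_def field_simps)
  have p'1: "p' > 1" using p by (simp add: p'_def field_simps)
  have pp': "1/p + 1/p' = 1" using ip' psu by simp
  have "1/s < 1/p'" "1/u < 1/p'" using ip' s u by simp_all
  then have sp: "s/p' > 1" and up: "u/p' > 1" using s u p'1 by (simp_all add: field_simps)
  have spu: "1/(s/p') + 1/(u/p') = 1" using ip' p'1 by (simp add: field_simps)
  define AG where "AG = (\<integral>\<^sup>+x. ennreal (G x powr s) \<partial>M)"
  define AH where "AH = (\<integral>\<^sup>+x. ennreal (H x powr u) \<partial>M)"
  have "(\<integral>\<^sup>+x. ennreal ((G x * H x) powr p') \<partial>M) = (\<integral>\<^sup>+x. ennreal (G x powr p' * H x powr p') \<partial>M)"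
    using nnG nnH by (simp add: powr_mult)
  also have "\<dots> \<le> epowr (\<integral>\<^sup>+x. ennreal ((G x powr p') powr (s/p')) \<partial>M) (1/(s/p')) *
      epowr (\<integral>\<^sup>+x. ennreal ((H x powr p') powr (u/p')) \<partial>M) (1/(u/p'))"
    by (rule nn_integral_Holder[OF sp up spu]) auto
  also have "\<dots> = epowr AG (1/(s/p')) * epowr AH (1/(u/p'))"
    using p'1 by (simp add: powr_powr AG_def AH_def)
  finally have "epowr (\<integral>\<^sup>+x. ennreal ((G x * H x) powr p') \<partial>M) (1/p')
      \<le> epowr (epowr AG (1/(s/p')) * epowr AH (1/(u/p'))) (1/p')"
    using p'1 by (intro epowr_mono) auto
  also have "\<dots> = epowr AG (1/s) * epowr AH (1/u)"
    using p'1 s u by (simp add: epowr_mult epowr_epowr)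
  finally have GH: "epowr (\<integral>\<^sup>+x. ennreal ((G x * H x) powr p') \<partial>M) (1/p') \<le> epowr AG (1/s) * epowr AH (1/u)" .
  have "(\<integral>\<^sup>+x. ennreal (F x * G x * H x) \<partial>M) = (\<integral>\<^sup>+x. ennreal (F x * (G x * H x)) \<partial>M)"
    by (simp add: mult.assoc)
  also have "\<dots> \<le> epowr (\<integral>\<^sup>+x. ennreal (F x powr p) \<partial>M) (1/p) *
      epowr (\<integral>\<^sup>+x. ennreal ((G x * H x) powr p') \<partial>M) (1/p')"
    by (rule nn_integral_Holder[OF p p'1 pp']) (auto intro: nnF nnG nnH mult_nonneg_nonneg)
  also have "\<dots> \<le> epowr (\<integral>\<^sup>+x. ennreal (F x powr p) \<partial>M) (1/p) * (epowr AG (1/s) * epowr AH (1/u))"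
    using GH by (rule mult_left_mono) simp
  finally show ?thesis by (simp add: mult.assoc AG_def AH_def)
qed

subsection \<open>Sums over a countable index set\<close>

lemma nn_integral_count_space_ge_point:
  fixes x :: "'i \<Rightarrow> ennreal"
  shows "x j \<le> (\<integral>\<^sup>+i. x i \<partial>count_space UNIV)"
proof -
  have "x j = (\<integral>\<^sup>+i. x i * indicator {j} i \<partial>count_space UNIV)"
    by (subst nn_integral_indicator_finite) auto
  also have "\<dots> \<le> (\<integral>\<^sup>+i. x i \<partial>count_space UNIV)"
    by (intro nn_integral_mono) (auto simp: indicator_def)
  finally show ?thesis .
qed

lemma nn_integral_count_space_epowr_le:
  fixes x :: "'i \<Rightarrow> ennreal"
  assumes th: "\<theta> \<ge> 1"
  shows "(\<integral>\<^sup>+j. epowr (x j) \<theta> \<partial>count_space UNIV) \<le> epowr (\<integral>\<^sup>+j. x j \<partial>count_space UNIV) \<theta>"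
proof (cases "(\<integral>\<^sup>+j. x j \<partial>count_space UNIV) = \<infinity>")
  case False
  define S where "S = (\<integral>\<^sup>+j. x j \<partial>count_space UNIV)"
  obtain s where s: "S = ennreal s" "s \<ge> 0" using False unfolding S_def
    by (cases "\<integral>\<^sup>+j. x j \<partial>count_space UNIV") auto
  have pt: "epowr (x j) \<theta> \<le> x j * ennreal (s powr (\<theta> - 1))" for j
  proof -
    have "x j \<le> S" unfolding S_def by (rule nn_integral_count_space_ge_point)
    then obtain t where t: "x j = ennreal t" "t \<ge> 0" "t \<le> s"
      using s by (cases "x j") (auto simp: ennreal_le_iff top_unique)
    have "t powr \<theta> \<le> t * s powr (\<theta> - 1)"
    proof (cases "t = 0")
      case False
      then have "t powr \<theta> = t * t powr (\<theta> - 1)"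
        using t by (simp add: powr_mult_base)
      also have "\<dots> \<le> t * s powr (\<theta> - 1)"
        using t th by (intro mult_left_mono powr_mono2) auto
      finally show ?thesis .
    qed (use th in simp)
    then show ?thesis using t s by (simp add: epowr_ennreal ennreal_mult[symmetric] ennreal_leI)
  qed
  have "(\<integral>\<^sup>+j. epowr (x j) \<theta> \<partial>count_space UNIV) \<le> (\<integral>\<^sup>+j. x j * ennreal (s powr (\<theta> - 1)) \<partial>count_space UNIV)"
    by (intro nn_integral_mono pt)
  also have "\<dots> = S * ennreal (s powr (\<theta> - 1))"
    unfolding S_def by (simp add: nn_integral_multc)
  also have "\<dots> = ennreal (s powr \<theta>)"
  proof (cases "s = 0")
    case False
    then show ?thesis using s by (simp add: ennreal_mult[symmetric] powr_mult_base)
  qed (use s th in simp)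
  also have "\<dots> = epowr S \<theta>" using s by (simp add: epowr_ennreal)
  finally show ?thesis unfolding S_def .
qed simp

subsection \<open>Carleson boxes and their weighted measure\<close>

lemma ilen_Icc: "a < b \<Longrightarrow> ilen {a..b} = b - a"
  by (simp add: ilen_def)

lemma real_interval_Icc: "L > 0 \<Longrightarrow> real_interval {a..a+L}"
  by (simp add: real_interval_def is_interval_cc)

lemma Qbox_Icc: "L > 0 \<Longrightarrow> Qbox {a..a+L} = {z. a \<le> Re z \<and> Re z \<le> a + L \<and> 0 < Im z \<and> Im z < L}"
  by (auto simp: Qbox_def ilen_Icc)

lemma sets_Qbox_Icc[measurable]: "Qbox {a..b} \<in> sets borel"
  unfolding Qbox_def by measurable

lemma Qbox_subset_H: "Qbox I \<subseteq> H"
  by (auto simp: Qbox_def H_def)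

lemma sets_dV[measurable_cong]: "sets (dV \<alpha>) = sets borel"
  by (simp add: dV_def)

lemma negpow_measurable[measurable]: "(\<lambda>x. negpow s (g x)) \<in> borel_measurable M"
  if [measurable]: "g \<in> borel_measurable M"
  unfolding negpow_def by measurable

lemma nn_integral_Ioo_powr:
  assumes L: "L > 0" and c: "c > -1"
  shows "(\<integral>\<^sup>+y. ennreal (indicator {0<..<L} y * y powr c) \<partial>lborel) = ennreal (L powr (c+1) / (c+1))"
proof -
  have "((\<lambda>x. x powr c) has_integral (L powr (c+1) / (c+1))) {0..L}"
    using has_integral_powr_from_0[OF c] L by simp
  then have "((\<lambda>x. if x \<in> {0..L} then x powr c else 0) has_integral (L powr (c+1) / (c+1))) UNIV"
    by (rule has_integral_restrict_UNIV[THEN iffD2])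
  then have "((\<lambda>x. indicator {0<..<L} x * x powr c) has_integral (L powr (c+1) / (c+1))) UNIV"
    by (rule has_integral_spike_finite[of "{0, L}", rotated 2]) (auto simp: indicator_def less_le)
  then show ?thesis
    by (rule nn_integral_has_integral_lborel[rotated 2]) (auto simp: indicator_def)
qed

lemma nn_integral_Qbox_Im_powr:
  assumes L: "L > 0" and ab: "\<alpha> + \<beta> > -1"
  shows "(\<integral>\<^sup>+z. indicator (Qbox {a..a+L}) z * ennreal (Im z powr \<beta>) \<partial>dV \<alpha>)
     = ennreal (L * (L powr (\<alpha>+\<beta>+1) / (\<alpha>+\<beta>+1)))"
proof -
  define g where "g = (\<lambda>b::complex. if b = 1 then (\<lambda>x. indicator {a..a+L} x :: ennreal)
     else (\<lambda>y. ennreal (indicator {0<..<L} y * y powr (\<alpha>+\<beta>))))"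
  have "(\<integral>\<^sup>+z. indicator (Qbox {a..a+L}) z * ennreal (Im z powr \<beta>) \<partial>dV \<alpha>)
     = (\<integral>\<^sup>+z. indicator H z * ennreal (Im z powr \<alpha>) * (indicator (Qbox {a..a+L}) z * ennreal (Im z powr \<beta>)) \<partial>lborel)"
    unfolding dV_def H_def by (subst nn_integral_density) auto
  also have "\<dots> = (\<integral>\<^sup>+z. (\<Prod>b\<in>Basis. g b (z \<bullet> b)) \<partial>lborel)"
  proof (intro nn_integral_cong)
    fix z :: complex
    have "(\<Prod>b\<in>Basis. g b (z \<bullet> b)) = g 1 (Re z) * g \<i> (Im z)"
      by (simp add: Basis_complex_def inner_complex_def)
    also have "\<dots> = indicator H z * ennreal (Im z powr \<alpha>) * (indicator (Qbox {a..a+L}) z * ennreal (Im z powr \<beta>))"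
      using L by (auto simp: g_def Qbox_Icc H_def indicator_def powr_add ennreal_mult)
    finally show "indicator H z * ennreal (Im z powr \<alpha>) * (indicator (Qbox {a..a+L}) z * ennreal (Im z powr \<beta>))
        = (\<Prod>b\<in>Basis. g b (z \<bullet> b))" by simp
  qed
  also have "\<dots> = (\<Prod>b\<in>Basis. (\<integral>\<^sup>+x. g b x \<partial>lborel))"
    by (rule nn_integral_lborel_prod) (auto simp: g_def)
  also have "\<dots> = (\<integral>\<^sup>+x. g 1 x \<partial>lborel) * (\<integral>\<^sup>+x. g \<i> x \<partial>lborel)"
    by (simp add: Basis_complex_def)
  also have "\<dots> = ennreal L * ennreal (L powr (\<alpha>+\<beta>+1) / (\<alpha>+\<beta>+1))"
    using L ab nn_integral_Ioo_powr[OF L, of "\<alpha>+\<beta>"] by (simp add: g_def)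
  also have "\<dots> = ennreal (L * (L powr (\<alpha>+\<beta>+1) / (\<alpha>+\<beta>+1)))"
    using L ab by (subst ennreal_mult[symmetric]) auto
  finally show ?thesis .
qed

lemma measure_Qbox:
  assumes L: "L > 0" and a: "\<alpha> > -1"
  shows "measure (dV \<alpha>) (Qbox {a..a+L}) = L powr (2+\<alpha>) / (1+\<alpha>)"
proof -
  have "emeasure (dV \<alpha>) (Qbox {a..a+L}) = (\<integral>\<^sup>+z. indicator (Qbox {a..a+L}) z \<partial>dV \<alpha>)"
    by (subst nn_integral_indicator) auto
  also have "\<dots> = (\<integral>\<^sup>+z. indicator (Qbox {a..a+L}) z * ennreal (Im z powr 0) \<partial>dV \<alpha>)"
    by (rule nn_integral_cong) (auto simp: Qbox_Icc[OF L] indicator_def)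
  also have "\<dots> = ennreal (L * (L powr (\<alpha>+0+1) / (\<alpha>+0+1)))"
    using nn_integral_Qbox_Im_powr[OF L, of \<alpha> 0] a by simp
  also have "L * (L powr (\<alpha>+0+1) / (\<alpha>+0+1)) = L powr (2+\<alpha>) / (1+\<alpha>)"
    using L by (simp add: powr_add add_ac power2_eq_square)
  finally show ?thesis
    unfolding measure_def using a L by simp
qed

subsection \<open>A dyadic family of boxes\<close>

definition dyadic_len :: "int \<Rightarrow> real" where
  "dyadic_len n = 2 powr of_int n"

text \<open>Boxes of side 2^n over intervals starting on the grid of half that step: the overlap is
  what lets every Carleson box fit into one of at most four times its side, while each point
  still lies in at most three boxes of each side.\<close>
definition dyadic_box :: "int \<times> int \<Rightarrow> complex set" where
  "dyadic_box = (\<lambda>(n, m). Qbox {of_int m * (dyadic_len n / 2) .. of_int m * (dyadic_len n / 2) + dyadic_len n})"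

lemma dyadic_len_pos[simp]: "dyadic_len n > 0"
  by (simp add: dyadic_len_def)

lemma sets_dyadic_box[measurable]: "dyadic_box j \<in> sets borel"
  by (simp add: dyadic_box_def split: prod.split)

lemma mem_dyadic_box:
  "z \<in> dyadic_box (n, m) \<longleftrightarrow> of_int m * (dyadic_len n / 2) \<le> Re z \<and> Re z \<le> of_int m * (dyadic_len n / 2) + dyadic_len n
     \<and> 0 < Im z \<and> Im z < dyadic_len n"
  unfolding dyadic_box_def using Qbox_Icc[OF dyadic_len_pos[of n]] by auto

lemma Qbox_subset_dyadic_box:
  assumes I: "real_interval I"
  obtains n m where "Qbox I \<subseteq> dyadic_box (n, m)" and "dyadic_len n \<le> 4 * ilen I"
proof -
  define l where "l = ilen I"
  have bI: "bdd_below I" "bdd_above I" using I unfolding real_interval_def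
    by (auto intro: bounded_imp_bdd_below bounded_imp_bdd_above)
  have l: "l > 0" using I unfolding real_interval_def l_def ilen_def by simp
  define n where "n = \<lceil>log 2 l\<rceil> + 1"
  define h where "h = dyadic_len n / 2"
  have h: "h = 2 powr real_of_int \<lceil>log 2 l\<rceil>"
    by (simp add: h_def dyadic_len_def n_def powr_add)
  have "l = 2 powr (log 2 l)" using l by simp
  also have "\<dots> \<le> h" unfolding h by (intro powr_mono) auto
  finally have h1: "l \<le> h" .
  have "h < 2 powr (log 2 l + 1)" unfolding h by (intro powr_less_mono) linarith+
  also have "\<dots> = 2 * l" using l by (simp add: powr_add)
  finally have h2: "h < 2 * l" .
  have hp: "h > 0" using l h1 by simp
  define m where "m = \<lfloor>Inf I / h\<rfloor>"
  have m1: "real_of_int m * h \<le> Inf I"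
    using hp by (simp add: m_def) (metis floor_divide_lower)
  have "Inf I / h < real_of_int m + 1" by (simp add: m_def)
  then have m2: "Inf I < real_of_int m * h + h" using hp by (simp add: field_simps)
  have "Qbox I \<subseteq> dyadic_box (n, m)"
  proof
    fix z assume "z \<in> Qbox I"
    then have rz: "Re z \<in> I" and iz: "0 < Im z" "Im z < l" by (auto simp: Qbox_def l_def)
    have "Inf I \<le> Re z" "Re z \<le> Sup I" using rz bI by (auto intro: cInf_lower cSup_upper)
    moreover have "Sup I = Inf I + l" by (simp add: l_def ilen_def)
    ultimately show "z \<in> dyadic_box (n, m)"
      unfolding mem_dyadic_box h_def[symmetric] using m1 m2 h1 iz by (simp add: h_def)
  qed
  moreover have "dyadic_len n \<le> 4 * ilen I" using h2 by (simp add: h_def l_def)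
  ultimately show ?thesis by (rule that)
qed

lemma dyadic_scale_sum_le:
  fixes y \<epsilon> :: real
  assumes e: "\<epsilon> > 0" and y: "y > 0"
  shows "(\<integral>\<^sup>+n. ennreal (if y < dyadic_len n then (y / dyadic_len n) powr \<epsilon> else 0) \<partial>count_space UNIV)
     \<le> ennreal (1 / (1 - 2 powr (-\<epsilon>)))"
proof -
  define g where "g n = (if y < dyadic_len n then (y / dyadic_len n) powr \<epsilon> else 0)" for n
  define n0 where "n0 = \<lfloor>log 2 y\<rfloor> + 1"
  define r where "r = (2::real) powr (-\<epsilon>)"
  have r: "0 \<le> r" "r < 1" using e by (auto simp: r_def powr_less_one)
  have g0: "g n = 0" if "n < n0" for n
  proof -
    have "real_of_int n \<le> log 2 y" using that unfolding n0_def by linarith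
    then have "dyadic_len n \<le> 2 powr (log 2 y)" unfolding dyadic_len_def by (intro powr_mono) auto
    then show ?thesis using y by (simp add: g_def)
  qed
  have "log 2 y < real_of_int n0" unfolding n0_def by linarith
  then have "2 powr (log 2 y) < 2 powr real_of_int n0" by (intro powr_less_mono) auto
  then have yn0: "y < 2 powr real_of_int n0" using y by simp
  have gk: "g (n0 + int k) \<le> r ^ k" for k
  proof (cases "y < dyadic_len (n0 + int k)")
    case True
    have L: "dyadic_len (n0 + int k) = 2 powr real_of_int n0 * 2 powr real k"
      by (simp add: dyadic_len_def powr_add)
    have "y / dyadic_len (n0 + int k) \<le> 1 / 2 powr real k"
      using yn0 y unfolding L by (simp add: field_simps)
    then have "(y / dyadic_len (n0 + int k)) powr \<epsilon> \<le> (1 / 2 powr real k) powr \<epsilon>"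
      using e divide_nonneg_pos[OF less_imp_le[OF y] dyadic_len_pos] by (intro powr_mono2) auto
    also have "\<dots> = r ^ k"
      by (simp add: r_def powr_divide powr_powr powr_minus_divide powr_realpow[symmetric] mult.commute)
    finally show ?thesis using True by (simp add: g_def)
  qed (use r in \<open>simp add: g_def\<close>)
  have "(\<integral>\<^sup>+n. ennreal (g n) \<partial>count_space UNIV) = (\<integral>\<^sup>+n. ennreal (g n) \<partial>count_space {n0..})"
    by (auto simp: nn_integral_count_space_indicator indicator_def g0 intro!: nn_integral_cong)
  also have "\<dots> = (\<integral>\<^sup>+k. ennreal (g (n0 + int k)) \<partial>count_space UNIV)"
  proof -
    have "bij_betw (\<lambda>k::nat. n0 + int k) UNIV {n0..}"
      by (rule bij_betwI[where g="\<lambda>n. nat (n - n0)"]) auto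
    then show ?thesis by (rule nn_integral_bij_count_space[symmetric])
  qed
  also have "\<dots> = (\<Sum>k. ennreal (g (n0 + int k)))"
    by (rule nn_integral_count_space_nat)
  also have "\<dots> \<le> (\<Sum>k. ennreal (r ^ k))"
    by (intro suminf_le) (auto intro: gk ennreal_leI)
  also have "\<dots> = ennreal (1 / (1 - r))"
    by (rule suminf_ennreal_eq) (use r in \<open>auto intro: geometric_sums\<close>)
  finally show ?thesis by (simp add: g_def r_def)
qed

lemma dyadic_box_overlap_le:
  fixes z :: complex
  assumes e: "\<epsilon> > 0" and y: "Im z > 0"
  shows "(\<integral>\<^sup>+j. ennreal ((Im z / dyadic_len (fst j)) powr \<epsilon>) * indicator (dyadic_box j) z \<partial>count_space UNIV)
     \<le> ennreal (3 / (1 - 2 powr (-\<epsilon>)))"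
proof -
  define g where "g n = (if Im z < dyadic_len n then (Im z / dyadic_len n) powr \<epsilon> else 0)" for n
  have scale: "(\<integral>\<^sup>+m. ennreal ((Im z / dyadic_len n) powr \<epsilon>) * indicator (dyadic_box (n, m)) z \<partial>count_space UNIV)
      \<le> 3 * ennreal (g n)" for n
  proof (cases "Im z < dyadic_len n")
    case True
    define h where "h = dyadic_len n / 2"
    have hp: "h > 0" by (simp add: h_def)
    define k where "k = \<lfloor>Re z / h\<rfloor>"
    define S where "S = {m. z \<in> dyadic_box (n, m)}"
    have S: "S \<subseteq> {k - 2, k - 1, k}"
    proof
      fix m assume "m \<in> S"
      then have "real_of_int m * h \<le> Re z" and "Re z \<le> real_of_int m * h + 2 * h"
        by (auto simp: S_def mem_dyadic_box h_def)
      then have "real_of_int m \<le> Re z / h" and "Re z / h \<le> real_of_int m + 2"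
        using hp by (simp_all add: field_simps)
      then show "m \<in> {k - 2, k - 1, k}" unfolding k_def by (auto, linarith+)
    qed
    have "(\<integral>\<^sup>+m. ennreal ((Im z / dyadic_len n) powr \<epsilon>) * indicator (dyadic_box (n, m)) z \<partial>count_space UNIV)
        = ennreal ((Im z / dyadic_len n) powr \<epsilon>) * emeasure (count_space UNIV) S"
      by (subst nn_integral_cmult_indicator[symmetric]) (auto simp: S_def indicator_def intro!: nn_integral_cong)
    also have "\<dots> \<le> ennreal ((Im z / dyadic_len n) powr \<epsilon>) * emeasure (count_space UNIV) {k - 2, k - 1, k}"
      using S by (intro mult_left_mono emeasure_mono) auto
    also have "\<dots> \<le> ennreal ((Im z / dyadic_len n) powr \<epsilon>) * 3"
      by (intro mult_left_mono) (auto simp: card_insert_if)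
    finally show ?thesis using True by (simp add: g_def mult.commute)
  qed (auto simp: mem_dyadic_box)
  have "(\<integral>\<^sup>+j. ennreal ((Im z / dyadic_len (fst j)) powr \<epsilon>) * indicator (dyadic_box j) z \<partial>count_space UNIV)
     = (\<integral>\<^sup>+n. \<integral>\<^sup>+m. ennreal ((Im z / dyadic_len n) powr \<epsilon>) * indicator (dyadic_box (n, m)) z \<partial>count_space UNIV \<partial>count_space UNIV)"
    by (subst nn_integral_fst_count_space[symmetric]) simp
  also have "\<dots> \<le> (\<integral>\<^sup>+n. 3 * ennreal (g n) \<partial>count_space UNIV)"
    by (intro nn_integral_mono scale)
  also have "\<dots> = 3 * (\<integral>\<^sup>+n. ennreal (g n) \<partial>count_space UNIV)"
    by (simp add: nn_integral_cmult)
  also have "\<dots> \<le> 3 * ennreal (1 / (1 - 2 powr (-\<epsilon>)))"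
    using dyadic_scale_sum_le[OF e y] by (intro mult_left_mono) (auto simp: g_def)
  also have "\<dots> = ennreal (3 / (1 - 2 powr (-\<epsilon>)))"
  proof -
    have "2 powr (-\<epsilon>) < 1" using e by (simp add: powr_less_one)
    then have "ennreal (3 * (1 / (1 - 2 powr (-\<epsilon>)))) = 3 * ennreal (1 / (1 - 2 powr (-\<epsilon>)))"
      by (subst ennreal_mult) auto
    then show ?thesis by simp
  qed
  finally show ?thesis .
qed

subsection \<open>The estimate on a single box\<close>

lemma nn_integral_indicator_le_weighted_Holder:
  fixes f :: "'a \<Rightarrow> 'b::real_normed_vector" and \<omega> v :: "'a \<Rightarrow> real"
  assumes p: "p > 1" and s: "s > 1" and u: "u > 1" and psu: "1/p + 1/s + 1/u = 1"
    and [measurable]: "Q \<in> sets M" "f \<in> borel_measurable M" "\<omega> \<in> borel_measurable M" "v \<in> borel_measurable M"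
    and pos: "\<And>z. z \<in> Q \<Longrightarrow> \<omega> z \<ge> 0 \<and> v z > 0"
    and fin: "(\<integral>\<^sup>+z. indicator Q z * negpow s (\<omega> z) \<partial>M) \<noteq> \<infinity>"
  shows "(\<integral>\<^sup>+z. indicator Q z * ennreal (norm (f z)) \<partial>M) \<le>
     epowr (\<integral>\<^sup>+z. indicator Q z * ennreal ((norm (f z) * \<omega> z * v z) powr p) \<partial>M) (1/p) *
     epowr (\<integral>\<^sup>+z. indicator Q z * negpow s (\<omega> z) \<partial>M) (1/s) *
     epowr (\<integral>\<^sup>+z. indicator Q z * ennreal (v z powr (-u)) \<partial>M) (1/u)"
proof -
  have "AE z in M. indicator Q z * negpow s (\<omega> z) \<noteq> \<infinity>"
    by (rule nn_integral_PInf_AE) (use fin in auto)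
  then have AE_pos: "AE z in M. z \<in> Q \<longrightarrow> \<omega> z > 0"
  proof (eventually_elim, intro impI)
    fix z assume "indicator Q z * negpow s (\<omega> z) \<noteq> \<infinity>" and "z \<in> Q"
    then have "\<omega> z \<noteq> 0" by (auto simp: negpow_def)
    with pos[OF \<open>z \<in> Q\<close>] show "\<omega> z > 0" by simp
  qed
  define F where "F z = indicator Q z * (norm (f z) * \<omega> z * v z)" for z
  define G where "G z = indicator Q z * inverse (\<omega> z)" for z
  define K where "K z = indicator Q z * inverse (v z)" for z
  have "(\<integral>\<^sup>+z. indicator Q z * ennreal (norm (f z)) \<partial>M) = (\<integral>\<^sup>+z. ennreal (F z * G z * K z) \<partial>M)"
  proof (rule nn_integral_cong_AE)
    show "AE z in M. indicator Q z * ennreal (norm (f z)) = ennreal (F z * G z * K z)"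
      using AE_pos by eventually_elim (auto simp: F_def G_def K_def indicator_def field_simps dest: pos)
  qed
  also have "\<dots> \<le> epowr (\<integral>\<^sup>+z. ennreal (F z powr p) \<partial>M) (1/p) * epowr (\<integral>\<^sup>+z. ennreal (G z powr s) \<partial>M) (1/s)
       * epowr (\<integral>\<^sup>+z. ennreal (K z powr u) \<partial>M) (1/u)"
    by (rule nn_integral_Holder3[OF p s u psu]) (auto simp: F_def G_def K_def indicator_def dest: pos)
  also have "\<dots> \<le> epowr (\<integral>\<^sup>+z. ennreal (F z powr p) \<partial>M) (1/p) * epowr (\<integral>\<^sup>+z. indicator Q z * negpow s (\<omega> z) \<partial>M) (1/s)
       * epowr (\<integral>\<^sup>+z. ennreal (K z powr u) \<partial>M) (1/u)"
  proof (rule mult_right_mono[OF mult_left_mono])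
    have "(\<integral>\<^sup>+z. ennreal (G z powr s) \<partial>M) \<le> (\<integral>\<^sup>+z. indicator Q z * negpow s (\<omega> z) \<partial>M)"
      by (intro nn_integral_mono) (auto simp: G_def negpow_def indicator_def powr_minus inverse_powr dest: pos)
    then show "epowr (\<integral>\<^sup>+z. ennreal (G z powr s) \<partial>M) (1/s) \<le> epowr (\<integral>\<^sup>+z. indicator Q z * negpow s (\<omega> z) \<partial>M) (1/s)"
      using s by (intro epowr_mono) auto
  qed auto
  also have "(\<lambda>z. ennreal (F z powr p)) = (\<lambda>z. indicator Q z * ennreal ((norm (f z) * \<omega> z * v z) powr p))"
    by (auto simp: F_def indicator_def)
  also have "(\<lambda>z. ennreal (K z powr u)) = (\<lambda>z. indicator Q z * ennreal (v z powr (-u)))"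
    by (auto simp: K_def indicator_def powr_minus inverse_powr dest: pos)
  finally show ?thesis .
qed

lemma nn_integral_le_Holder_Im_weight:
  fixes f :: "complex \<Rightarrow> complex" and \<omega> :: "complex \<Rightarrow> real"
  assumes p: "p > 1" and s: "s > 1" and u: "u > 1" and psu: "1/p + 1/s + 1/u = 1"
    and [measurable]: "Q \<in> sets borel" "\<omega> \<in> borel_measurable borel" "f \<in> borel_measurable borel"
    and QH: "Q \<subseteq> H" and w_nonneg: "\<forall>z\<in>H. \<omega> z \<ge> 0"
    and fin: "(\<integral>\<^sup>+z. indicator Q z * negpow s (\<omega> z) \<partial>dV \<alpha>) \<noteq> \<infinity>"
  shows "(\<integral>\<^sup>+z. indicator Q z * ennreal (norm (f z)) \<partial>dV \<alpha>) \<le>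
     epowr (\<integral>\<^sup>+z. indicator Q z * ennreal (norm (f z * \<omega> z) powr p * Im z powr (\<delta>*p)) \<partial>dV \<alpha>) (1/p) *
     epowr (\<integral>\<^sup>+z. indicator Q z * negpow s (\<omega> z) \<partial>dV \<alpha>) (1/s) *
     epowr (\<integral>\<^sup>+z. indicator Q z * ennreal (Im z powr (-(\<delta>*u))) \<partial>dV \<alpha>) (1/u)"
proof -
  have pos: "\<omega> z \<ge> 0 \<and> Im z powr \<delta> > 0" if "z \<in> Q" for z
    using that QH w_nonneg unfolding H_def by auto
  have "(\<integral>\<^sup>+z. indicator Q z * ennreal (norm (f z)) \<partial>dV \<alpha>) \<le>
      epowr (\<integral>\<^sup>+z. indicator Q z * ennreal ((norm (f z) * \<omega> z * Im z powr \<delta>) powr p) \<partial>dV \<alpha>) (1/p) *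
      epowr (\<integral>\<^sup>+z. indicator Q z * negpow s (\<omega> z) \<partial>dV \<alpha>) (1/s) *
      epowr (\<integral>\<^sup>+z. indicator Q z * ennreal ((Im z powr \<delta>) powr (-u)) \<partial>dV \<alpha>) (1/u)"
    by (rule nn_integral_indicator_le_weighted_Holder[OF p s u psu]) (use pos fin in auto)
  also have "(\<lambda>z. indicator Q z * ennreal ((norm (f z) * \<omega> z * Im z powr \<delta>) powr p))
      = (\<lambda>z. indicator Q z * ennreal (norm (f z * \<omega> z) powr p * Im z powr (\<delta>*p)))"
    by (intro ext) (auto simp: powr_mult powr_powr norm_mult split: split_indicator dest: pos)
  also have "(\<lambda>z. indicator Q z * ennreal ((Im z powr \<delta>) powr (-u))) = (\<lambda>z. indicator Q z * ennreal (Im z powr (-(\<delta>*u))))"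
    by (auto simp: indicator_def powr_powr)
  finally show ?thesis .
qed

lemma Holder_Im_weight_testing:
  fixes f :: "complex \<Rightarrow> complex" and \<omega> :: "complex \<Rightarrow> real" and m :: ennreal
  assumes p: "p > 1" and s: "s > 1" and u: "u > 1" and psu: "1/p + 1/s + 1/u = 1" and q: "q > 0"
    and Q_meas[measurable]: "Q \<in> sets borel" and w_meas[measurable]: "\<omega> \<in> borel_measurable borel"
    and f_meas[measurable]: "f \<in> borel_measurable borel"
    and QH: "Q \<subseteq> H" and w_nonneg: "\<forall>z\<in>H. \<omega> z \<ge> 0"
    and test: "epowr (\<integral>\<^sup>+z. indicator Q z * negpow s (\<omega> z) \<partial>dV \<alpha>) (q/s) * m \<le> ennreal B"
  shows "epowr (\<integral>\<^sup>+z. indicator Q z * ennreal (norm (f z)) \<partial>dV \<alpha>) q * m \<le>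
     epowr (\<integral>\<^sup>+z. indicator Q z * ennreal (norm (f z * \<omega> z) powr p * Im z powr (\<delta>*p)) \<partial>dV \<alpha>) (q/p) *
     epowr (\<integral>\<^sup>+z. indicator Q z * ennreal (Im z powr (-(\<delta>*u))) \<partial>dV \<alpha>) (q/u) * ennreal B"
proof (cases "m = 0")
  case False
  define N where "N = (\<integral>\<^sup>+z. indicator Q z * negpow s (\<omega> z) \<partial>dV \<alpha>)"
  define X where "X = (\<integral>\<^sup>+z. indicator Q z * ennreal (norm (f z * \<omega> z) powr p * Im z powr (\<delta>*p)) \<partial>dV \<alpha>)"
  define W where "W = (\<integral>\<^sup>+z. indicator Q z * ennreal (Im z powr (-(\<delta>*u))) \<partial>dV \<alpha>)"
  define I where "I = (\<integral>\<^sup>+z. indicator Q z * ennreal (norm (f z)) \<partial>dV \<alpha>)"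
  have "N \<noteq> \<infinity>"
  proof
    assume "N = \<infinity>"
    then have "epowr N (q/s) * m = \<infinity>" using False by (simp add: ennreal_top_mult)
    then show False using test by (simp add: N_def top_unique)
  qed
  then have "I \<le> epowr X (1/p) * epowr N (1/s) * epowr W (1/u)"
    unfolding I_def X_def N_def W_def by (rule nn_integral_le_Holder_Im_weight[OF p s u psu Q_meas w_meas f_meas QH w_nonneg])
  then have "epowr I q \<le> epowr (epowr X (1/p) * epowr N (1/s) * epowr W (1/u)) q"
    using q by (rule epowr_mono[rotated])
  also have "\<dots> = epowr X (q/p) * epowr W (q/u) * epowr N (q/s)"
    using q p s u by (simp add: epowr_mult epowr_epowr mult_ac)
  finally have "epowr I q * m \<le> epowr X (q/p) * epowr W (q/u) * epowr N (q/s) * m"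
    by (rule mult_right_mono) simp
  also have "\<dots> = epowr X (q/p) * epowr W (q/u) * (epowr N (q/s) * m)"
    by (simp add: mult.assoc)
  also have "\<dots> \<le> epowr X (q/p) * epowr W (q/u) * ennreal B"
    using test by (intro mult_left_mono) (simp_all add: N_def)
  finally show ?thesis unfolding I_def X_def W_def .
qed simp

lemma testing_condition_rescale:
  fixes N m :: ennreal
  assumes V: "V > 0" and a: "a > 0" and C: "C \<ge> 0"
    and cnd: "ennreal (V powr e) * epowr (N / ennreal V) a * m \<le> ennreal C"
  shows "epowr N a * m \<le> ennreal (C * V powr (a - e))"
proof -
  have "N / ennreal V = N * ennreal (1/V)"
    using V by (simp add: divide_ennreal_def inverse_ennreal inverse_eq_divide)
  then have "epowr (N / ennreal V) a = epowr N a * ennreal ((1/V) powr a)"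
    using a V by (simp add: epowr_mult epowr_ennreal)
  then have "ennreal (V powr e * (1/V) powr a) * (epowr N a * m) \<le> ennreal C"
    using cnd by (simp add: ennreal_mult mult_ac)
  then have "ennreal (V powr (a - e)) * (ennreal (V powr e * (1/V) powr a) * (epowr N a * m))
      \<le> ennreal (V powr (a - e)) * ennreal C"
    by (rule mult_left_mono) simp
  moreover have "ennreal (V powr (a - e)) * (ennreal (V powr e * (1/V) powr a) * (epowr N a * m))
      = ennreal (V powr (a - e) * (V powr e * (1/V) powr a)) * (epowr N a * m)"
    by (simp add: ennreal_mult mult.assoc)
  moreover have "V powr (a - e) * (V powr e * (1/V) powr a) = 1"
    using V by (simp add: powr_diff powr_divide field_simps)
  moreover have "ennreal (C * V powr (a - e)) = ennreal (V powr (a - e)) * ennreal C"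
    using C by (simp add: ennreal_mult mult.commute)
  ultimately show ?thesis by simp
qed

text \<open>The powers of the side L cancel exactly because 1/p + 1/s + 1/u = 1.\<close>
lemma Qbox_estimate_scale_free:
  fixes L \<alpha> \<gamma> \<delta> p q s u C :: real
  assumes L: "L > 0" and a: "1 + \<alpha> > 0" and d: "1 + \<alpha> - \<delta>*u > 0" and u: "u > 0"
    and psu: "1/p + 1/s + 1/u = 1"
  defines "e \<equiv> q * (\<gamma> / (2 + \<alpha>) - 1 / p)"
  shows "L powr (-(2 + \<alpha> - \<gamma>) * q) * L powr (\<delta>*q) * (L * (L powr (\<alpha> + - (\<delta>*u) + 1) / (\<alpha> + - (\<delta>*u) + 1))) powr (q/u)
     * (C * (L powr (2+\<alpha>) / (1+\<alpha>)) powr (q/s - e))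
     = C * (1 / (1+\<alpha>-\<delta>*u) powr (q/u)) * (1 / (1+\<alpha>) powr (q/s - e))"
proof -
  have "q/p + q/s + q/u = q" using psu by (metis distrib_left mult_1_right times_divide_eq_right)
  then have "(2+\<alpha>)*(q/p) + (2+\<alpha>)*(q/s) + (2+\<alpha>)*(q/u) = (2+\<alpha>)*q"
    by (metis distrib_left)
  moreover have "(2+\<alpha>)*e = \<gamma>*q - (2+\<alpha>)*(q/p)" using a by (simp add: e_def field_simps)
  moreover have "(2+\<alpha>-\<delta>*u)*(q/u) = (2+\<alpha>)*(q/u) - \<delta>*q" using u by (simp add: field_simps)
  ultimately have ex: "-(2 + \<alpha> - \<gamma>)*q + \<delta>*q + (2+\<alpha>-\<delta>*u)*(q/u) + (2+\<alpha>)*(q/s - e) = 0"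
    by (simp add: algebra_simps)
  have 1: "L * (L powr (\<alpha> + - (\<delta>*u) + 1) / (\<alpha> + - (\<delta>*u) + 1)) = L powr (2+\<alpha>-\<delta>*u) / (1+\<alpha>-\<delta>*u)"
    using L powr_mult_base[of L "\<alpha> + - (\<delta>*u) + 1"] by (simp add: algebra_simps)
  have 2: "(L powr (2+\<alpha>-\<delta>*u) / (1+\<alpha>-\<delta>*u)) powr (q/u) = L powr ((2+\<alpha>-\<delta>*u)*(q/u)) / (1+\<alpha>-\<delta>*u) powr (q/u)"
    using L d by (simp add: powr_divide powr_powr)
  have 3: "(L powr (2+\<alpha>) / (1+\<alpha>)) powr (q/s - e) = L powr ((2+\<alpha>)*(q/s - e)) / (1+\<alpha>) powr (q/s - e)"
    using L a by (simp add: powr_divide powr_powr)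
  have 4: "L powr (-(2 + \<alpha> - \<gamma>)*q) * L powr (\<delta>*q) * L powr ((2+\<alpha>-\<delta>*u)*(q/u)) * L powr ((2+\<alpha>)*(q/s - e)) = 1"
    using L ex by (simp add: powr_add[symmetric])
  show ?thesis
    unfolding 1 2 3
    by (subst 4[symmetric], simp only: divide_inverse mult_ac)
qed

lemma Qbox_local_estimate:
  fixes f :: "complex \<Rightarrow> complex" and \<omega> :: "complex \<Rightarrow> real" and \<mu> :: "complex measure"
  assumes a: "\<alpha> > -1" and p: "p > 1" and s: "s > 1" and u: "u > 1" and psu: "1/p + 1/s + 1/u = 1"
    and \<delta>u: "\<delta> * u < 1 + \<alpha>" and q: "q > 0" and L: "L > 0" and C: "C \<ge> 0"
    and w_meas[measurable]: "\<omega> \<in> borel_measurable borel" and f_meas[measurable]: "f \<in> borel_measurable borel"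
    and w_nonneg: "\<forall>z\<in>H. \<omega> z \<ge> 0"
    and cnd: "ennreal (measure (dV \<alpha>) (Qbox {x..x+L}) powr (q * (\<gamma> / (2 + \<alpha>) - 1 / p))) *
        epowr ((\<integral>\<^sup>+z. indicator (Qbox {x..x+L}) z * negpow s (\<omega> z) \<partial>dV \<alpha>)
                 / ennreal (measure (dV \<alpha>) (Qbox {x..x+L}))) (q/s) *
        emeasure \<mu> (Qbox {x..x+L}) \<le> ennreal C"
  shows "epowr (ennreal (L powr (-(2 + \<alpha> - \<gamma>))) * (\<integral>\<^sup>+z. indicator (Qbox {x..x+L}) z * ennreal (norm (f z)) \<partial>dV \<alpha>)) q
           * emeasure \<mu> (Qbox {x..x+L})
     \<le> ennreal (C * (1 / (1+\<alpha>-\<delta>*u) powr (q/u)) * (1 / (1+\<alpha>) powr (q/s - q * (\<gamma> / (2 + \<alpha>) - 1 / p)))) *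
       epowr (ennreal (L powr (-\<delta>*p)) * (\<integral>\<^sup>+z. indicator (Qbox {x..x+L}) z *
           ennreal (norm (f z * \<omega> z) powr p * Im z powr (\<delta>*p)) \<partial>dV \<alpha>)) (q/p)"
proof -
  define e where "e = q * (\<gamma> / (2 + \<alpha>) - 1 / p)"
  define Q where "Q = Qbox {x..x+L}"
  define V where "V = L powr (2+\<alpha>) / (1+\<alpha>)"
  define X where "X = (\<integral>\<^sup>+z. indicator Q z * ennreal (norm (f z * \<omega> z) powr p * Im z powr (\<delta>*p)) \<partial>dV \<alpha>)"
  define W where "W = (\<integral>\<^sup>+z. indicator Q z * ennreal (Im z powr (-(\<delta>*u))) \<partial>dV \<alpha>)"
  define I where "I = (\<integral>\<^sup>+z. indicator Q z * ennreal (norm (f z)) \<partial>dV \<alpha>)"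
  define \<mu>Q where "\<mu>Q = emeasure \<mu> Q"
  define \<kappa> where "\<kappa> = 2 + \<alpha> - \<gamma>"
  have V: "V > 0" using L a by (simp add: V_def)
  have W: "W = ennreal (L * (L powr (\<alpha> + - (\<delta>*u) + 1) / (\<alpha> + - (\<delta>*u) + 1)))"
    unfolding W_def Q_def using \<delta>u by (intro nn_integral_Qbox_Im_powr[OF L]) simp
  have "epowr (\<integral>\<^sup>+z. indicator Q z * negpow s (\<omega> z) \<partial>dV \<alpha>) (q/s) * \<mu>Q \<le> ennreal (C * V powr (q/s - e))"
    using testing_condition_rescale[OF V _ C] cnd q s measure_Qbox[OF L a]
    by (simp add: \<mu>Q_def Q_def V_def e_def)
  then have I_\<mu>: "epowr I q * \<mu>Q \<le> epowr X (q/p) * epowr W (q/u) * ennreal (C * V powr (q/s - e))"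
    unfolding I_def X_def W_def Q_def
    by (rule Holder_Im_weight_testing[OF p s u psu q sets_Qbox_Icc w_meas f_meas Qbox_subset_H w_nonneg])
  have "epowr (ennreal (L powr (-\<kappa>)) * I) q * \<mu>Q = ennreal (L powr (-\<kappa>*q)) * (epowr I q * \<mu>Q)"
    using L q by (simp add: epowr_cmult powr_powr mult.assoc)
  also have "\<dots> \<le> ennreal (L powr (-\<kappa>*q)) * (epowr X (q/p) * epowr W (q/u) * ennreal (C * V powr (q/s - e)))"
    using I_\<mu> by (rule mult_left_mono) simp
  also have "\<dots> = ennreal (L powr (-\<kappa>*q) * L powr (\<delta>*q)
      * (L * (L powr (\<alpha> + - (\<delta>*u) + 1) / (\<alpha> + - (\<delta>*u) + 1))) powr (q/u)
      * (C * (L powr (2+\<alpha>) / (1+\<alpha>)) powr (q/s - e))) * epowr (ennreal (L powr (-\<delta>*p)) * X) (q/p)"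
  proof -
    define X' where "X' = ennreal (L powr (-\<delta>*p)) * X"
    have "X = ennreal (L powr (\<delta>*p)) * X'"
      using L by (simp add: X'_def mult.assoc[symmetric] ennreal_mult[symmetric] powr_add[symmetric])
    then have "epowr X (q/p) = ennreal (L powr (\<delta>*q)) * epowr X' (q/p)"
      using L p q by (simp add: epowr_cmult powr_powr)
    moreover have "epowr W (q/u) = ennreal ((L * (L powr (\<alpha> + - (\<delta>*u) + 1) / (\<alpha> + - (\<delta>*u) + 1))) powr (q/u))"
      using W \<delta>u L by (simp add: epowr_ennreal)
    ultimately show ?thesis
      unfolding V_def X'_def using L C \<delta>u by (simp add: ennreal_mult mult_ac)
  qed
  also have "\<dots> = ennreal (C * (1 / (1+\<alpha>-\<delta>*u) powr (q/u)) * (1 / (1+\<alpha>) powr (q/s - e)))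
      * epowr (ennreal (L powr (-\<delta>*p)) * X) (q/p)"
    using Qbox_estimate_scale_free[OF L _ _ _ psu, where \<gamma>=\<gamma> and q=q and C=C] a \<delta>u u
    by (simp add: e_def \<kappa>_def)
  finally show ?thesis unfolding X_def I_def \<mu>Q_def Q_def e_def \<kappa>_def .
qed

subsection \<open>Domination of the maximal function by dyadic averages\<close>

definition frac_average :: "real \<Rightarrow> real \<Rightarrow> (complex \<Rightarrow> complex) \<Rightarrow> int \<times> int \<Rightarrow> ennreal" where
  "frac_average \<alpha> \<kappa> f j =
     ennreal (dyadic_len (fst j) powr (-\<kappa>)) * (\<integral>\<^sup>+z. indicator (dyadic_box j) z * ennreal (norm (f z)) \<partial>dV \<alpha>)"

lemma Mag_epowr_le_dyadic_sum:
  assumes \<gamma>: "\<gamma> < 2 + \<alpha>" and q: "q > 0"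
  shows "epowr (Mag \<alpha> \<gamma> f z) q \<le> ennreal (4 powr ((2 + \<alpha> - \<gamma>) * q)) *
     (\<integral>\<^sup>+j. epowr (frac_average \<alpha> (2 + \<alpha> - \<gamma>) f j) q * indicator (dyadic_box j) z \<partial>count_space UNIV)"
proof -
  define \<kappa> where "\<kappa> = 2 + \<alpha> - \<gamma>"
  define c where "c = (4::real) powr \<kappa>"
  define T where "T = (\<integral>\<^sup>+j. epowr (frac_average \<alpha> \<kappa> f j) q * indicator (dyadic_box j) z \<partial>count_space UNIV)"
  have \<kappa>: "\<kappa> > 0" using \<gamma> by (simp add: \<kappa>_def)
  have "Mag \<alpha> \<gamma> f z \<le> epowr (ennreal (c powr q) * T) (1/q)"
    unfolding Mag_def
  proof (rule SUP_least)
    fix I assume "I \<in> {I. real_interval I \<and> z \<in> Qbox I}"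
    then have I: "real_interval I" and zI: "z \<in> Qbox I" by auto
    obtain n m where sub: "Qbox I \<subseteq> dyadic_box (n, m)" and len: "dyadic_len n \<le> 4 * ilen I"
      using Qbox_subset_dyadic_box[OF I] .
    have "ilen I powr (-\<kappa>) \<le> (dyadic_len n / 4) powr (-\<kappa>)"
      by (rule powr_mono2') (use len \<kappa> in auto)
    also have "\<dots> = c * dyadic_len n powr (-\<kappa>)"
      by (simp add: c_def powr_divide powr_minus_divide)
    finally have "ilen I powr (-\<kappa>) \<le> c * dyadic_len n powr (-\<kappa>)" .
    moreover have "(\<integral>\<^sup>+ w. indicator (Qbox I) w * ennreal (norm (f w)) \<partial>dV \<alpha>) \<le>
        (\<integral>\<^sup>+ w. indicator (dyadic_box (n, m)) w * ennreal (norm (f w)) \<partial>dV \<alpha>)"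
      using sub by (intro nn_integral_mono) (auto simp: indicator_def)
    ultimately have "ennreal (ilen I powr (-\<kappa>)) * (\<integral>\<^sup>+ w. indicator (Qbox I) w * ennreal (norm (f w)) \<partial>dV \<alpha>)
        \<le> ennreal (c * dyadic_len n powr (-\<kappa>)) * (\<integral>\<^sup>+ w. indicator (dyadic_box (n, m)) w * ennreal (norm (f w)) \<partial>dV \<alpha>)"
      by (intro mult_mono ennreal_leI) auto
    also have "\<dots> = ennreal c * frac_average \<alpha> \<kappa> f (n, m)"
      by (simp add: frac_average_def c_def ennreal_mult mult.assoc)
    finally have "ennreal (ilen I powr (-\<kappa>)) * (\<integral>\<^sup>+ w. indicator (Qbox I) w * ennreal (norm (f w)) \<partial>dV \<alpha>)
        \<le> ennreal c * frac_average \<alpha> \<kappa> f (n, m)" .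
    then have "epowr (ennreal (ilen I powr (-\<kappa>)) * (\<integral>\<^sup>+ w. indicator (Qbox I) w * ennreal (norm (f w)) \<partial>dV \<alpha>)) q
        \<le> ennreal (c powr q) * epowr (frac_average \<alpha> \<kappa> f (n, m)) q"
      using q by (metis epowr_mono epowr_cmult c_def powr_ge_zero)
    also have "epowr (frac_average \<alpha> \<kappa> f (n, m)) q \<le> T"
      using nn_integral_count_space_ge_point[of "\<lambda>j. epowr (frac_average \<alpha> \<kappa> f j) q * indicator (dyadic_box j) z" "(n, m)"]
        sub zI by (auto simp: T_def)
    finally show "ennreal (ilen I powr (-(2 + \<alpha> - \<gamma>))) * (\<integral>\<^sup>+ w. indicator (Qbox I) w * ennreal (norm (f w)) \<partial>dV \<alpha>)
        \<le> epowr (ennreal (c powr q) * T) (1/q)"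
      using q by (intro epowr_le_imp_le_epowr_inverse) (auto simp: \<kappa>_def mult_left_mono)
  qed
  then have "epowr (Mag \<alpha> \<gamma> f z) q \<le> epowr (epowr (ennreal (c powr q) * T) (1/q)) q"
    using q by (intro epowr_mono) auto
  then show ?thesis
    using q by (simp add: epowr_epowr c_def powr_powr T_def \<kappa>_def)
qed

lemma nn_integral_Mag_le_dyadic_sum:
  assumes "\<gamma> < 2 + \<alpha>" and "q > 0" and mu_sets: "sets \<mu> = sets borel"
  shows "(\<integral>\<^sup>+z. epowr (Mag \<alpha> \<gamma> f z) q \<partial>\<mu>) \<le> ennreal (4 powr ((2 + \<alpha> - \<gamma>) * q)) *
     (\<integral>\<^sup>+j. epowr (frac_average \<alpha> (2 + \<alpha> - \<gamma>) f j) q * emeasure \<mu> (dyadic_box j) \<partial>count_space UNIV)"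
proof -
  define c where "c = ennreal (4 powr ((2 + \<alpha> - \<gamma>) * q))"
  define B where "B j = epowr (frac_average \<alpha> (2 + \<alpha> - \<gamma>) f j) q" for j
  have [measurable]: "dyadic_box j \<in> sets \<mu>" for j using mu_sets by simp
  have "(\<integral>\<^sup>+z. epowr (Mag \<alpha> \<gamma> f z) q \<partial>\<mu>) \<le> (\<integral>\<^sup>+z. \<integral>\<^sup>+j. c * (B j * indicator (dyadic_box j) z) \<partial>count_space UNIV \<partial>\<mu>)"
    using Mag_epowr_le_dyadic_sum[OF assms(1,2)]
    by (intro nn_integral_mono) (simp add: nn_integral_cmult c_def B_def)
  also have "\<dots> = (\<integral>\<^sup>+j. \<integral>\<^sup>+z. c * B j * indicator (dyadic_box j) z \<partial>\<mu> \<partial>count_space UNIV)"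
    by (subst nn_integral_count_space_nn_integral) (auto simp: mult.assoc)
  also have "\<dots> = (\<integral>\<^sup>+j. c * (B j * emeasure \<mu> (dyadic_box j)) \<partial>count_space UNIV)"
  proof (intro nn_integral_cong)
    fix j
    have "(\<integral>\<^sup>+z. c * B j * indicator (dyadic_box j) z \<partial>\<mu>) = c * B j * emeasure \<mu> (dyadic_box j)"
      by (rule nn_integral_cmult_indicator) simp
    then show "(\<integral>\<^sup>+z. c * B j * indicator (dyadic_box j) z \<partial>\<mu>) = c * (B j * emeasure \<mu> (dyadic_box j))"
      by (simp add: mult.assoc)
  qed
  also have "\<dots> = c * (\<integral>\<^sup>+j. B j * emeasure \<mu> (dyadic_box j) \<partial>count_space UNIV)"
    by (rule nn_integral_cmult) simp
  finally show ?thesis by (simp add: c_def B_def)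
qed

definition dyadic_energy :: "complex measure \<Rightarrow> real \<Rightarrow> (complex \<Rightarrow> real) \<Rightarrow> int \<times> int \<Rightarrow> ennreal" where
  "dyadic_energy M \<epsilon> g j =
     ennreal (dyadic_len (fst j) powr (-\<epsilon>)) * (\<integral>\<^sup>+z. indicator (dyadic_box j) z * ennreal (g z * Im z powr \<epsilon>) \<partial>M)"

lemma dyadic_energy_sum_le:
  fixes g :: "complex \<Rightarrow> real"
  assumes e: "\<epsilon> > 0" and [measurable]: "g \<in> borel_measurable M" and M[measurable_cong]: "sets M = sets borel"
    and g: "\<And>z. g z \<ge> 0"
  shows "(\<integral>\<^sup>+j. dyadic_energy M \<epsilon> g j \<partial>count_space UNIV)
    \<le> ennreal (3 / (1 - 2 powr (-\<epsilon>))) * (\<integral>\<^sup>+z. ennreal (g z) \<partial>M)"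
proof -
  have "(\<integral>\<^sup>+j. dyadic_energy M \<epsilon> g j \<partial>count_space UNIV)
    = (\<integral>\<^sup>+j. \<integral>\<^sup>+z. ennreal (dyadic_len (fst j) powr (-\<epsilon>)) *
      (indicator (dyadic_box j) z * ennreal (g z * Im z powr \<epsilon>)) \<partial>M \<partial>count_space UNIV)"
    unfolding dyadic_energy_def by (intro nn_integral_cong nn_integral_cmult[symmetric]) measurable
  also have "\<dots> = (\<integral>\<^sup>+z. \<integral>\<^sup>+j. ennreal (dyadic_len (fst j) powr (-\<epsilon>)) *
      (indicator (dyadic_box j) z * ennreal (g z * Im z powr \<epsilon>)) \<partial>count_space UNIV \<partial>M)"
    by (rule nn_integral_count_space_nn_integral[symmetric]) auto
  also have "\<dots> = (\<integral>\<^sup>+z. \<integral>\<^sup>+j. ennreal (g z) * (ennreal ((Im z / dyadic_len (fst j)) powr \<epsilon>) * indicator (dyadic_box j) z)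
        \<partial>count_space UNIV \<partial>M)"
  proof (intro nn_integral_cong)
    fix z j
    show "ennreal (dyadic_len (fst j) powr (-\<epsilon>)) * (indicator (dyadic_box j) z * ennreal (g z * Im z powr \<epsilon>))
      = ennreal (g z) * (ennreal ((Im z / dyadic_len (fst j)) powr \<epsilon>) * indicator (dyadic_box j) z)"
    proof (cases "z \<in> dyadic_box j")
      case True
      then have "Im z > 0" by (cases j) (simp add: mem_dyadic_box)
      then have "(Im z / dyadic_len (fst j)) powr \<epsilon> = dyadic_len (fst j) powr (-\<epsilon>) * Im z powr \<epsilon>"
        by (simp add: powr_divide powr_minus_divide)
      then show ?thesis using True g by (simp add: ennreal_mult[symmetric] mult_ac)
    qed simp
  qed
  also have "\<dots> \<le> (\<integral>\<^sup>+z. ennreal (g z) * ennreal (3 / (1 - 2 powr (-\<epsilon>))) \<partial>M)"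
  proof (intro nn_integral_mono)
    fix z
    show "(\<integral>\<^sup>+j. ennreal (g z) * (ennreal ((Im z / dyadic_len (fst j)) powr \<epsilon>) * indicator (dyadic_box j) z)
        \<partial>count_space UNIV) \<le> ennreal (g z) * ennreal (3 / (1 - 2 powr (-\<epsilon>)))"
    proof (cases "Im z > 0")
      case True
      then show ?thesis
        by (simp add: nn_integral_cmult mult_left_mono dyadic_box_overlap_le[OF e])
    next
      case False
      then have "z \<notin> dyadic_box j" for j by (cases j) (auto simp: mem_dyadic_box)
      then show ?thesis by simp
    qed
  qed
  also have "\<dots> = ennreal (3 / (1 - 2 powr (-\<epsilon>))) * (\<integral>\<^sup>+z. ennreal (g z) \<partial>M)"
    by (simp add: nn_integral_multc mult.commute)
  finally show ?thesis .
qed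

lemma Mag_weighted_Lq_bound:
  fixes \<alpha> \<gamma> p q s u \<delta> C :: real and \<omega> :: "complex \<Rightarrow> real" and \<mu> :: "complex measure"
  assumes a: "\<alpha> > -1" and \<gamma>: "\<gamma> < 2 + \<alpha>" and p: "p > 1" and pq: "p \<le> q"
    and s: "s > 1" and u: "u > 1" and psu: "1/p + 1/s + 1/u = 1"
    and \<delta>: "\<delta> > 0" and \<delta>u: "\<delta> * u < 1 + \<alpha>" and C: "C > 0"
    and w_meas[measurable]: "\<omega> \<in> borel_measurable borel" and w_nonneg: "\<forall>z\<in>H. \<omega> z \<ge> 0"
    and mu_sets: "sets \<mu> = sets borel"
    and cond: "\<forall>I. real_interval I \<longrightarrow>
        ennreal (measure (dV \<alpha>) (Qbox I) powr (q * (\<gamma> / (2 + \<alpha>) - 1 / p))) *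
        epowr ((\<integral>\<^sup>+ z. indicator (Qbox I) z * negpow s (\<omega> z) \<partial>dV \<alpha>) / ennreal (measure (dV \<alpha>) (Qbox I))) (q / s) *
        emeasure \<mu> (Qbox I) \<le> ennreal C"
  shows "\<exists>K > 0. \<forall>f :: complex \<Rightarrow> complex. f \<in> borel_measurable borel \<longrightarrow>
           epowr (\<integral>\<^sup>+ z. epowr (Mag \<alpha> \<gamma> f z) q \<partial>\<mu>) (1 / q)
             \<le> ennreal K * epowr (\<integral>\<^sup>+ z. ennreal (norm (f z * \<omega> z) powr p) \<partial>dV \<alpha>) (1 / p)"
proof -
  define \<kappa> where "\<kappa> = 2 + \<alpha> - \<gamma>"
  define c where "c = 4 powr (\<kappa> * q)"
  define C1 where "C1 = C * (1 / (1+\<alpha>-\<delta>*u) powr (q/u)) * (1 / (1+\<alpha>) powr (q/s - q * (\<gamma> / (2 + \<alpha>) - 1 / p)))"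
  define C2 where "C2 = 3 / (1 - 2 powr (-(\<delta>*p)))"
  define K where "K = (c * C1) powr (1/q) * C2 powr (1/p)"
  have q: "q > 0" and qp: "q/p \<ge> 1" using p pq by auto
  have C1: "C1 > 0" using C \<delta>u a by (simp add: C1_def)
  have C2: "C2 > 0" using \<delta> p by (simp add: C2_def powr_less_one)
  have c: "c > 0" by (simp add: c_def)
  have K: "K > 0" using C1 C2 c by (simp add: K_def)
  show ?thesis
  proof (intro exI[of _ K] conjI allI impI K)
    fix f :: "complex \<Rightarrow> complex"
    assume f_meas[measurable]: "f \<in> borel_measurable borel"
    define X where "X = dyadic_energy (dV \<alpha>) (\<delta> * p) (\<lambda>z. norm (f z * \<omega> z) powr p)"
    define P where "P = (\<integral>\<^sup>+ z. ennreal (norm (f z * \<omega> z) powr p) \<partial>dV \<alpha>)"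
    have box: "epowr (frac_average \<alpha> \<kappa> f j) q * emeasure \<mu> (dyadic_box j) \<le> ennreal C1 * epowr (X j) (q/p)" for j
    proof -
      obtain n m where j: "j = (n, m)" by (cases j)
      show ?thesis
        using Qbox_local_estimate[OF a p s u psu \<delta>u q dyadic_len_pos[of n] less_imp_le[OF C] w_meas f_meas w_nonneg
            cond[rule_format, OF real_interval_Icc[OF dyadic_len_pos[of n]]]]
        unfolding j frac_average_def X_def dyadic_energy_def dyadic_box_def \<kappa>_def C1_def by simp
    qed
    have "(\<integral>\<^sup>+ z. epowr (Mag \<alpha> \<gamma> f z) q \<partial>\<mu>)
        \<le> ennreal c * (\<integral>\<^sup>+j. epowr (frac_average \<alpha> \<kappa> f j) q * emeasure \<mu> (dyadic_box j) \<partial>count_space UNIV)"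
      using nn_integral_Mag_le_dyadic_sum[OF \<gamma> q mu_sets] by (simp add: c_def \<kappa>_def)
    also have "\<dots> \<le> ennreal c * (\<integral>\<^sup>+j. ennreal C1 * epowr (X j) (q/p) \<partial>count_space UNIV)"
      by (intro mult_left_mono nn_integral_mono box) simp
    also have "\<dots> = ennreal c * (ennreal C1 * (\<integral>\<^sup>+j. epowr (X j) (q/p) \<partial>count_space UNIV))"
      by (simp add: nn_integral_cmult)
    also have "\<dots> \<le> ennreal c * (ennreal C1 * epowr (\<integral>\<^sup>+j. X j \<partial>count_space UNIV) (q/p))"
      by (intro mult_left_mono nn_integral_count_space_epowr_le qp) simp_all
    also have "\<dots> \<le> ennreal c * (ennreal C1 * epowr (ennreal C2 * P) (q/p))"
      using dyadic_energy_sum_le[where g="\<lambda>z. norm (f z * \<omega> z) powr p" and M="dV \<alpha>", OF _ _ sets_dV] \<delta> p q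
      unfolding X_def P_def C2_def by (intro mult_left_mono epowr_mono) auto
    also have "\<dots> = ennreal (c * C1 * C2 powr (q/p)) * epowr P (q/p)"
      using q p C1 C2 c by (simp add: epowr_cmult ennreal_mult mult.assoc)
    finally have "epowr (\<integral>\<^sup>+ z. epowr (Mag \<alpha> \<gamma> f z) q \<partial>\<mu>) (1/q)
        \<le> epowr (ennreal (c * C1 * C2 powr (q/p)) * epowr P (q/p)) (1/q)"
      using q by (intro epowr_mono) auto
    also have "\<dots> = ennreal K * epowr P (1/p)"
      using q p C1 C2 c by (simp add: epowr_cmult epowr_epowr K_def powr_mult powr_powr)
    finally show "epowr (\<integral>\<^sup>+ z. epowr (Mag \<alpha> \<gamma> f z) q \<partial>\<mu>) (1/q) \<le> ennreal K * epowr P (1/p)" .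
  qed
qed

lemma Holder_exponent_split:
  fixes p r :: real
  assumes p: "p > 1" and r: "r > 1"
  shows "p / (p - 1) * r > 1" and "\<exists>u > 1. 1/p + 1/(p / (p - 1) * r) + 1/u = 1"
proof -
  have "p / (p - 1) > 1" using p by (simp add: field_simps)
  then show "p / (p - 1) * r > 1" using r by (metis less_trans mult_less_cancel_left_pos mult.right_neutral zero_less_one)
  define t where "t = (1 - 1/p) * (1 - 1/r)"
  have lt: "0 < 1 - 1/p" "1 - 1/p < 1" "0 < 1 - 1/r" "1 - 1/r < 1" using p r by auto
  then have "0 < t" by (simp add: t_def)
  moreover have "t < 1 * 1" unfolding t_def using lt by (intro mult_strict_mono) auto
  moreover have "1/p + 1/(p / (p - 1) * r) + 1/(1/t) = 1" using p r by (simp add: t_def field_simps)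
  ultimately show "\<exists>u > 1. 1/p + 1/(p / (p - 1) * r) + 1/u = 1" by (intro exI[of _ "1/t"]) auto
qed

theorem corollary4p9:
  fixes \<alpha> \<gamma> p q r C :: real
    and \<omega> :: "complex \<Rightarrow> real"
    and \<mu> :: "complex measure"
  assumes "\<alpha> > -1" and "0 \<le> \<gamma>" and "\<gamma> < 2 + \<alpha>"
    and "1 < p" and "p \<le> q"
    and w_meas: "\<omega> \<in> borel_measurable borel"
    and w_nonneg: "\<forall>z\<in>H. \<omega> z \<ge> 0"
    and w_loc: "\<forall>K. compact K \<and> K \<subseteq> H \<longrightarrow> set_integrable lborel K \<omega>"
    and mu_sets: "sets \<mu> = sets borel"
    and "r > 1" and "C > 0"
    and cond: "\<forall>I. real_interval I \<longrightarrow>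
        ennreal (measure (dV \<alpha>) (Qbox I) powr (q * (\<gamma> / (2 + \<alpha>) - 1 / p))) *
        epowr ((\<integral>\<^sup>+ z. indicator (Qbox I) z * negpow (p / (p - 1) * r) (\<omega> z) \<partial>dV \<alpha>)
                 / ennreal (measure (dV \<alpha>) (Qbox I)))
              (q / (p / (p - 1) * r)) *
        emeasure \<mu> (Qbox I) \<le> ennreal C"
  shows "\<exists>K > 0. \<forall>f :: complex \<Rightarrow> complex.
           f \<in> borel_measurable borel \<and>
           (\<integral>\<^sup>+ z. ennreal (norm (f z) powr p * \<omega> z) \<partial>dV \<alpha>) < \<infinity> \<longrightarrow>
           epowr (\<integral>\<^sup>+ z. epowr (Mag \<alpha> \<gamma> f z) q \<partial>\<mu>) (1 / q)
             \<le> ennreal K * epowr (\<integral>\<^sup>+ z. ennreal (norm (f z * \<omega> z) powr p) \<partial>dV \<alpha>) (1 / p)"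
proof -
  note a = assms(1) and \<gamma> = assms(3) and p = assms(4) and pq = assms(5) and r = assms(10) and C = assms(11)
  define s where "s = p / (p - 1) * r"
  obtain u where u: "u > 1" and psu: "1/p + 1/s + 1/u = 1"
    using Holder_exponent_split(2)[OF p r] unfolding s_def by blast
  have s: "s > 1" using Holder_exponent_split(1)[OF p r] by (simp add: s_def)
  define \<delta> where "\<delta> = (1 + \<alpha>) / (2 * u)"
  have "\<delta> * u = (1 + \<alpha>) / 2" using u by (simp add: \<delta>_def)
  then have \<delta>: "\<delta> > 0" and \<delta>u: "\<delta> * u < 1 + \<alpha>" using a u by (auto simp: \<delta>_def)
  show ?thesis
    using Mag_weighted_Lq_bound[OF a \<gamma> p pq s u psu \<delta> \<delta>u C w_meas w_nonneg mu_sets cond[folded s_def]] by blast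
qed

end
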